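(* Let $\alpha=1+\sqrt2$. Then for every integer $n\ge1$, $$\Big\lceil \alpha n-\tfrac{1}{\sqrt2}\Big\rceil-\alpha n+\tfrac{1}{\sqrt2}>\frac{\alpha-1}{4\alpha n}.$$ *)

theory Defs
  imports Complex_Main
begin

end

theory Submission
  imports Defs
begin

text \<open>With \<open>m = 2n - 1\<close> we have \<open>\<alpha> n - 1/\<surd>2 = n + m/\<surd>2\<close>, so the left-hand side
  is \<open>d = k - m/\<surd>2\<close> with \<open>k = \<lceil>m/\<surd>2\<rceil>\<close>. Since \<open>k\<surd>2 \<ge> m\<close> and \<open>m\<close> is odd,
  \<open>2k\<^sup>2 - m\<^sup>2\<close> is a positive integer, i.e. \<open>(k\<surd>2 - m)(k\<surd>2 + m) \<ge> 1\<close>.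
  As \<open>k\<surd>2 - m = d\<surd>2\<close> and \<open>k\<surd>2 + m < 2m + \<surd>2\<close>, this gives
  \<open>d > 1/(2\<surd>2 m + 2)\<close>, and that bound is at least \<open>(\<alpha> - 1)/(4\<alpha>n)\<close>.\<close>

lemma sqrt2_times_int_neq_odd:
  fixes k m :: int
  assumes "odd m"
  shows "real_of_int k * sqrt 2 \<noteq> real_of_int m"
proof
  assume "real_of_int k * sqrt 2 = real_of_int m"
  then have "real_of_int (2 * k\<^sup>2) = real_of_int (m\<^sup>2)"
    by (metis of_int_mult of_int_numeral of_int_power power_mult_distrib
        real_sqrt_pow2 zero_le_numeral mult.commute)
  then have "2 * k\<^sup>2 = m\<^sup>2"
    by (simp only: of_int_eq_iff)
  then have "even (m\<^sup>2)"
    by (metis dvd_triv_left)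
  with assms show False
    by simp
qed

lemma ceiling_odd_div_sqrt2_gap:
  fixes m :: int
  assumes "odd m" and "m \<ge> 0"
  shows "1 / (2 * sqrt 2 * m + 2) < \<lceil>m / sqrt 2\<rceil> - m / sqrt 2"
proof -
  define k where "k = \<lceil>m / sqrt 2\<rceil>"
  define d where "d = real_of_int k - m / sqrt 2"
  have d_lt_1: "d < 1"
    unfolding d_def k_def by linarith
  have k_sqrt2: "real_of_int k * sqrt 2 = m + d * sqrt 2"
    unfolding d_def by (simp add: field_simps)
  have "real_of_int m \<le> real_of_int k * sqrt 2"
    unfolding k_def by (simp add: pos_divide_le_eq[symmetric])
  with sqrt2_times_int_neq_odd[OF \<open>odd m\<close>, of k]
  have m_lt: "real_of_int m < real_of_int k * sqrt 2"
    by linarith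
  then have "(real_of_int m)\<^sup>2 < (real_of_int k * sqrt 2)\<^sup>2"
    using \<open>m \<ge> 0\<close> by (intro power_strict_mono) auto
  then have "real_of_int (m\<^sup>2) < real_of_int (2 * k\<^sup>2)"
    by (simp add: power_mult_distrib mult.commute)
  then have "m\<^sup>2 < 2 * k\<^sup>2"
    by (simp only: of_int_less_iff)
  then have "1 \<le> 2 * k\<^sup>2 - m\<^sup>2"
    by simp
  then have sq_gap: "1 \<le> 2 * (real_of_int k)\<^sup>2 - (real_of_int m)\<^sup>2"
    by (simp flip: of_int_le_iff[where 'a=real])
  have "2 * (real_of_int k)\<^sup>2 - (real_of_int m)\<^sup>2
      = (real_of_int k * sqrt 2 - m) * (real_of_int k * sqrt 2 + m)"
    by (simp add: algebra_simps power2_eq_square)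
  also have "\<dots> = d * sqrt 2 * (2 * m + d * sqrt 2)"
    by (simp add: k_sqrt2)
  also have "\<dots> < d * sqrt 2 * (2 * m + sqrt 2)"
    using m_lt k_sqrt2 d_lt_1 by (intro mult_strict_left_mono) auto
  finally have "1 < d * (2 * sqrt 2 * m + 2)"
    using sq_gap by (simp add: algebra_simps)
  moreover have "0 < 2 * sqrt 2 * m + 2"
    using \<open>m \<ge> 0\<close> by (simp add: add_nonneg_pos)
  ultimately show ?thesis
    by (simp add: d_def k_def divide_less_eq mult.commute)
qed

lemma sqrt2_ratio_le_ceiling_gap_bound:
  fixes n :: nat
  assumes "n \<ge> 1"
  shows "sqrt 2 / (4 * (1 + sqrt 2) * real n) \<le> 1 / (2 * sqrt 2 * (2 * real n - 1) + 2)"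
proof -
  have "sqrt 2 - 1 \<le> (sqrt 2 - 1) * real n"
    using assms by (simp add: mult_le_cancel_left1)
  then have "4 * (2 * real n - 1) + 2 * sqrt 2 \<le> 4 * (1 + sqrt 2) * real n"
    by (simp add: algebra_simps) (use real_sqrt_ge_zero[of 2] in linarith)
  moreover have "sqrt 2 * (2 * sqrt 2 * x + 2) = 4 * x + 2 * sqrt 2" for x :: real
    by (simp add: distrib_left mult.left_commute[of "sqrt 2"])
  ultimately have "sqrt 2 * (2 * sqrt 2 * (2 * real n - 1) + 2) \<le> 4 * (1 + sqrt 2) * real n"
    by simp
  then show ?thesis
    using assms by (simp add: divide_simps add_nonneg_pos)
qed

theorem mainTheorem7:
  fixes n :: nat
  assumes "n \<ge> 1"
  shows "let \<alpha> = 1 + sqrt 2 in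
    real_of_int \<lceil>\<alpha> * real n - 1 / sqrt 2\<rceil> - \<alpha> * real n + 1 / sqrt 2
      > (\<alpha> - 1) / (4 * \<alpha> * real n)"
proof -
  define m where "m = 2 * int n - 1"
  have m_real: "real_of_int m = 2 * real n - 1"
    unfolding m_def by simp
  have "odd m" and "m \<ge> 0"
    using assms unfolding m_def by auto
  have "(1 + sqrt 2) * real n - 1 / sqrt 2 = m / sqrt 2 + of_int (int n)"
    unfolding m_real by (simp add: field_simps)
  then have "real_of_int \<lceil>(1 + sqrt 2) * real n - 1 / sqrt 2\<rceil> - (1 + sqrt 2) * real n
      + 1 / sqrt 2 = \<lceil>m / sqrt 2\<rceil> - m / sqrt 2"
    using ceiling_add_of_int[of "m / sqrt 2" "int n"] by simp
  moreover have "sqrt 2 / (4 * (1 + sqrt 2) * real n) \<le> 1 / (2 * sqrt 2 * m + 2)"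
    using sqrt2_ratio_le_ceiling_gap_bound[OF assms] by (simp add: m_real)
  ultimately show ?thesis
    using ceiling_odd_div_sqrt2_gap[OF \<open>odd m\<close> \<open>m \<ge> 0\<close>]
    unfolding Let_def by simp
qed

end
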